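(* Let $k\ge 2$. Let $G$ be one of the following seven graphs, each obtained from a cycle $C_n=v_0v_1\cdots v_{n-1}v_0$ by identifying the vertices within each listed block into one vertex (vertices not in any block are left alone): (1) $G_{4k+2}(\mathscr A,\mathscr B)$: $n=8k+4$, blocks $\{v_{2i},v_{4k+2i+2}\}$ ($0\le i\le 2k$), $\{v_{2j+1},v_{2k+2j+3}\}$ ($0\le j\le k$), $\{v_{4k+2j+5},v_{6k+2j+5}\}$ ($0\le j\le k-1$). (2) $G^1_{4k+1}(\mathscr A,\mathscr B,\mathscr C)$: $n=8k+2$, blocks $\{v_{2i},v_{4k+2i}\}$ ($1\le i\le 2k$), $\{v_{2j+1},v_{4k+2j+3}\}$ ($0\le j\le 2k-1$), $\{v_0,v_{4k+1}\}$. (3) $G^1_{4k+3}(\mathscr A,\mathscr B,\mathscr C)$: $n=8k+6$, blocks $\{v_{2i},v_{4k+2+2i}\}$ ($1\le i\le 2k+1$), $\{v_{2j+1},v_{6k+5+2j}\}$ ($0\le j\le k$), $\{v_{2k+3+2j},v_{4k+5+2j}\}$ ($0\le j\le k-1$), $\{v_0,v_{4k+3}\}$. (4) $G^2_{4k+1}(\mathscr A,\mathscr B,\mathscr C)$: $n=8k+1$, blocks $\{v_{2i},v_{4k+2i}\}$ ($1\le i\le 2k$), $\{v_{2j+1},v_{2k+2j+1}\}$ ($0\le j\le k-1$), $\{v_{4k+2j+1},v_{6k+2j+1}\}$ ($0\le j\le k-1$); $v_0$ is not merged. (5) $G^2_{4k+3}(\mathscr A,\mathscr B,\mathscr C)$: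 $n=8k+5$, blocks $\{v_{2i},v_{4k+2+2i}\}$ ($1\le i\le 2k+1$), $\{v_{2j+1},v_{6k+3+2j}\}$ ($0\le j\le k$), $\{v_{2k+3+2j},v_{4k+3+2j}\}$ ($0\le j\le k-1$); $v_0$ is not merged. (6) $G^3_{4k+1}(\mathscr A,\mathscr B,\mathscr C)$: $n=8k+3$, blocks $\{v_{2i},v_{4k+2i}\}$ ($1\le i\le k$), $\{v_{2k+2i},v_{6k+2+2i}\}$ ($1\le i\le k$), $\{v_{2j+1},v_{8k+1-2j}\}$ ($0\le j\le k-1$), $\{v_{2k+3+2j},v_{4k+3+2j}\}$ ($0\le j\le k-1$), and the three-element block $\{v_0,v_{2k+1},v_{6k+2}\}$. (7) $G^3_{4k+3}(\mathscr A,\mathscr B,\mathscr C)$: $n=8k+7$, blocks $\{v_{2i},v_{4k+4+2i}\}$ ($1\le i\le k$), $\{v_{2k+2+2i},v_{6k+4+2i}\}$ ($1\le i\le k+1$), $\{v_{4j+1},v_{4k+3+2j}\}$ ($0\le j\le k$), $\{v_{4j+3},v_{6k+7+2j}\}$ ($0\le j\le k-1$), and the three-element block $\{v_0,v_{2k+2},v_{6k+5}\}$. Let $e$ be the edge of $G$ that receives label $1$ or the edge that receives label $n$ under the labeling of $G$ inherited from the $C$-labeling of $C_n$ (equivalently, $e$ is the image in $G$ of the edge $v_0v_1$ or of the edge $v_1v_2$). Then $\chi_{la}(G)=\chi_{la}(G-e)=3$.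
   Context: Identifying a set of pairwise nonadjacent vertices means replacing them by one new vertex incident to all edges previously incident to any of them (parallel edges may arise); the edges of the new graph correspond bijectively to the edges of $C_n$, so an edge labeling of $C_n$ is inherited. The $C$-labeling of $C_n=v_0v_1\cdots v_{n-1}v_0$ (indices mod $n$) is $f(v_jv_{j+1})=(j+2)/2$ for even $j$ and $f(v_jv_{j+1})=n-(j-1)/2$ for odd $j$, $0\le j\le n-1$. For a connected (multi)graph $G$ with edge set $E$, $|E|=q$, a local antimagic labeling is a bijection $f:E\to\{1,\dots,q\}$ such that adjacent vertices $x,y$ satisfy $f^+(x)\ne f^+(y)$, where $f^+(x)$ is the sum of labels of edges incident to $x$; $\chi_{la}(G)$ is the minimum number of distinct values of $f^+$ over all local antimagic labelings of $G$. $G-e$ denotes $G$ with the edge $e$ deleted. *)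

theory Defs
  imports Main
begin

(* Cycle C_n = v_0 v_1 ... v_{n-1} v_0: vertex v_i is the natural number i (i < n),
   edge number j (j < n) is v_j v_{(j+1) mod n}.
   Identifying the vertices of each block of a family B of pairwise disjoint sets
   gives the quotient map qmap n B : vertex of C_n -> vertex of G
   (each block is represented by its least element). *)
definition qmap :: "nat \<Rightarrow> nat set set \<Rightarrow> nat \<Rightarrow> nat" where
  "qmap n B i = Min {j. j < n \<and> (j = i \<or> (\<exists>b\<in>B. i \<in> b \<and> j \<in> b))}"

definition end1 :: "nat \<Rightarrow> nat set set \<Rightarrow> nat \<Rightarrow> nat" where
  "end1 n B j = qmap n B j"
definition end2 :: "nat \<Rightarrow> nat set set \<Rightarrow> nat \<Rightarrow> nat" where
  "end2 n B j = qmap n B (Suc j mod n)"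

(* The (multi)graph G is given by n, B, vertex set qmap n B ` {0..<n}
   and an edge set E of edge indices (E = {0..<n} for G, E = {0..<n} - {e} for G - e). *)

definition vsum :: "nat \<Rightarrow> nat set set \<Rightarrow> nat set \<Rightarrow> (nat \<Rightarrow> nat) \<Rightarrow> nat \<Rightarrow> nat" where
  "vsum n B E f x = (\<Sum>j\<in>{j\<in>E. x = end1 n B j \<or> x = end2 n B j}. f j)"

definition local_antimagic :: "nat \<Rightarrow> nat set set \<Rightarrow> nat set \<Rightarrow> (nat \<Rightarrow> nat) \<Rightarrow> bool" where
  "local_antimagic n B E f \<longleftrightarrow>
     bij_betw f E {1..card E} \<and>
     (\<forall>j\<in>E. vsum n B E f (end1 n B j) \<noteq> vsum n B E f (end2 n B j))"

definition chi_la :: "nat \<Rightarrow> nat set set \<Rightarrow> nat set \<Rightarrow> nat" where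
  "chi_la n B E = Inf {card (vsum n B E f ` (qmap n B ` {0..<n})) | f. local_antimagic n B E f}"

definition cLabel :: "nat \<Rightarrow> nat \<Rightarrow> nat" where
  "cLabel n j = (if even j then (j + 2) div 2 else n - (j - 1) div 2)"

definition cyc_n :: "nat \<Rightarrow> nat \<Rightarrow> nat" where
  "cyc_n k t = (if t = 1 then 8*k+4 else if t = 2 then 8*k+2 else if t = 3 then 8*k+6
     else if t = 4 then 8*k+1 else if t = 5 then 8*k+5 else if t = 6 then 8*k+3 else 8*k+7)"

definition blocks :: "nat \<Rightarrow> nat \<Rightarrow> nat set set" where
  "blocks k t =
   (if t = 1 then
      (\<lambda>i. {2*i, 4*k+2*i+2}) ` {0..2*k} \<union> (\<lambda>j. {2*j+1, 2*k+2*j+3}) ` {0..k}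
      \<union> (\<lambda>j. {4*k+2*j+5, 6*k+2*j+5}) ` {0..<k}
    else if t = 2 then
      (\<lambda>i. {2*i, 4*k+2*i}) ` {1..2*k} \<union> (\<lambda>j. {2*j+1, 4*k+2*j+3}) ` {0..<2*k}
      \<union> {{0, 4*k+1}}
    else if t = 3 then
      (\<lambda>i. {2*i, 4*k+2+2*i}) ` {1..2*k+1} \<union> (\<lambda>j. {2*j+1, 6*k+5+2*j}) ` {0..k}
      \<union> (\<lambda>j. {2*k+3+2*j, 4*k+5+2*j}) ` {0..<k} \<union> {{0, 4*k+3}}
    else if t = 4 then
      (\<lambda>i. {2*i, 4*k+2*i}) ` {1..2*k} \<union> (\<lambda>j. {2*j+1, 2*k+2*j+1}) ` {0..<k}
      \<union> (\<lambda>j. {4*k+2*j+1, 6*k+2*j+1}) ` {0..<k}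
    else if t = 5 then
      (\<lambda>i. {2*i, 4*k+2+2*i}) ` {1..2*k+1} \<union> (\<lambda>j. {2*j+1, 6*k+3+2*j}) ` {0..k}
      \<union> (\<lambda>j. {2*k+3+2*j, 4*k+3+2*j}) ` {0..<k}
    else if t = 6 then
      (\<lambda>i. {2*i, 4*k+2*i}) ` {1..k} \<union> (\<lambda>i. {2*k+2*i, 6*k+2+2*i}) ` {1..k}
      \<union> (\<lambda>j. {2*j+1, 8*k+1-2*j}) ` {0..<k} \<union> (\<lambda>j. {2*k+3+2*j, 4*k+3+2*j}) ` {0..<k}
      \<union> {{0, 2*k+1, 6*k+2}}
    else
      (\<lambda>i. {2*i, 4*k+4+2*i}) ` {1..k} \<union> (\<lambda>i. {2*k+2+2*i, 6*k+4+2*i}) ` {1..k+1}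
      \<union> (\<lambda>j. {4*j+1, 4*k+3+2*j}) ` {0..k} \<union> (\<lambda>j. {4*j+3, 6*k+7+2*j}) ` {0..<k}
      \<union> {{0, 2*k+2, 6*k+5}})"

end

theory Submission
  imports Defs
begin

(* Every vertex of G other than the image of v_0 is obtained from two cycle vertices of the same
   parity.  In the C-labeling the two labels at v_c, c > 0, add up to n + 2 or n + 1 according to
   the parity of c, so such a vertex has sum 2(n + 2) or 2(n + 1), and the image of v_0 provides
   the third value; deleting the edge labelled 1 (resp. n) and relabelling by f - 1 (resp. n - f)
   preserves this pattern.  Conversely, with only two vertex sums the cycle vertices
   v_2, ..., v_(n-1) alternate between them, and so does v_1, which is merged with an odd vertex.
   If v_0 is merged with a vertex of the parity of v_(n-1), the edge v_(n-1) v_0 joins two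
   vertices with equal sums.  Otherwise either the edge v_0 v_1 does, or double counting the label
   sum over the even and the odd cycle vertices gives a contradiction. *)

section \<open>Vertex sums of a quotient of a cycle\<close>

definition cyc_pred :: "nat \<Rightarrow> nat \<Rightarrow> nat" where
  "cyc_pred n c = (if c = 0 then n - 1 else c - 1)"

(* A deleted edge gets label 0, so that the vertex sums of G and of G - e are both sums over all
   n edges of the cycle. *)
definition edge_label :: "nat set \<Rightarrow> (nat \<Rightarrow> nat) \<Rightarrow> nat \<Rightarrow> nat" where
  "edge_label E f j = (if j \<in> E then f j else 0)"

definition cyc_vsum :: "nat \<Rightarrow> nat set \<Rightarrow> (nat \<Rightarrow> nat) \<Rightarrow> nat \<Rightarrow> nat" where
  "cyc_vsum n E f c = edge_label E f c + edge_label E f (cyc_pred n c)"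

lemma Suc_mod_eq_iff_cyc_pred:
  assumes "j < n" "c < n"
  shows "Suc j mod n = c \<longleftrightarrow> j = cyc_pred n c"
  using assms unfolding cyc_pred_def by (cases "Suc j = n") auto

lemma Suc_mod_mem_iff_cyc_pred_image:
  assumes j: "j < n" and A: "A \<subseteq> {..<n}"
  shows "Suc j mod n \<in> A \<longleftrightarrow> j \<in> cyc_pred n ` A"
proof
  assume "Suc j mod n \<in> A"
  moreover have "j = cyc_pred n (Suc j mod n)"
    using Suc_mod_eq_iff_cyc_pred[OF j, of "Suc j mod n"] j by simp
  ultimately show "j \<in> cyc_pred n ` A" by blast
next
  assume "j \<in> cyc_pred n ` A"
  then obtain c where "c \<in> A" "j = cyc_pred n c" by blast
  moreover have "c < n" using \<open>c \<in> A\<close> A by blast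
  ultimately have "Suc j mod n = c" using Suc_mod_eq_iff_cyc_pred[OF j] by blast
  then show "Suc j mod n \<in> A" using \<open>c \<in> A\<close> by simp
qed

lemma inj_on_cyc_pred: "inj_on (cyc_pred n) {..<n}"
  by (auto simp: inj_on_def cyc_pred_def split: if_splits)

lemma cyc_pred_image: "cyc_pred n ` {..<n} = {..<n}"
proof
  show "cyc_pred n ` {..<n} \<subseteq> {..<n}" by (auto simp: cyc_pred_def)
  show "{..<n} \<subseteq> cyc_pred n ` {..<n}"
  proof
    fix j assume "j \<in> {..<n}"
    then have "j = cyc_pred n (Suc j mod n)" "Suc j mod n < n"
      using Suc_mod_eq_iff_cyc_pred[of j n "Suc j mod n"] by auto
    then show "j \<in> cyc_pred n ` {..<n}" by blast
  qed
qed

lemma sum_edge_label: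
  assumes "E \<subseteq> {..<n}"
  shows "(\<Sum>j<n. edge_label E f j) = (\<Sum>j\<in>E. f j)"
proof -
  have "(\<Sum>j<n. edge_label E f j) = (\<Sum>j\<in>{..<n} \<inter> E. f j)"
    by (simp add: edge_label_def sum.inter_restrict)
  also have "{..<n} \<inter> E = E" using assms by auto
  finally show ?thesis .
qed

lemma sum_cyc_vsum:
  "(\<Sum>c<n. cyc_vsum n E f c) = 2 * (\<Sum>j<n. edge_label E f j)"
proof -
  have "(\<Sum>c<n. edge_label E f (cyc_pred n c)) = (\<Sum>j\<in>cyc_pred n ` {..<n}. edge_label E f j)"
    using inj_on_cyc_pred by (simp add: sum.reindex)
  then show ?thesis by (simp add: cyc_vsum_def sum.distrib cyc_pred_image)
qed

lemma odd_lessThan_eq_image: "{c. c < (n::nat) \<and> odd c} = (\<lambda>m. 2 * m + 1) ` {..<n div 2}"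
proof (intro set_eqI iffI)
  fix c assume "c \<in> {c. c < n \<and> odd c}"
  then have "c = 2 * (c div 2) + 1" "c div 2 < n div 2" by auto presburger
  then show "c \<in> (\<lambda>m. 2 * m + 1) ` {..<n div 2}" by blast
qed auto

lemma card_odd_lessThan: "card {c. c < (n::nat) \<and> odd c} = n div 2"
  unfolding odd_lessThan_eq_image by (simp add: card_image inj_on_def)

lemma sum_pairs_lessThan: "(\<Sum>j<2 * N. g j) = (\<Sum>m<N. g (2 * m) + g (2 * m + 1 :: nat))"
  by (induction N) (auto simp: add.assoc)

lemma sum_cyc_vsum_odd:
  "(\<Sum>c | c < n \<and> odd c. cyc_vsum n E f c) = (\<Sum>j<2 * (n div 2). edge_label E f j)"
proof -
  have "(\<Sum>c | c < n \<and> odd c. cyc_vsum n E f c) = (\<Sum>m<n div 2. cyc_vsum n E f (2 * m + 1))"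
    unfolding odd_lessThan_eq_image by (simp add: sum.reindex inj_on_def)
  also have "\<dots> = (\<Sum>m<n div 2. edge_label E f (2 * m) + edge_label E f (2 * m + 1))"
    by (simp add: cyc_vsum_def cyc_pred_def add.commute)
  finally show ?thesis by (simp add: sum_pairs_lessThan)
qed

lemma sum_cyc_vsum_even:
  assumes "even n"
  shows "(\<Sum>c | c < n \<and> even c. cyc_vsum n E f c) = (\<Sum>j<n. edge_label E f j)"
proof -
  have split: "{..<n} = {c. c < n \<and> even c} \<union> {c. c < n \<and> odd c}" by auto
  have "(\<Sum>c<n. cyc_vsum n E f c) = (\<Sum>c | c < n \<and> even c. cyc_vsum n E f c)
      + (\<Sum>c | c < n \<and> odd c. cyc_vsum n E f c)"
    by (subst split, rule sum.union_disjoint) auto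
  moreover have "2 * (n div 2) = n" using assms by simp
  ultimately show ?thesis using sum_cyc_vsum[of n E f] sum_cyc_vsum_odd[of n E f] by simp
qed

lemma sum_bij_betw_atLeastAtMost:
  fixes f :: "'a \<Rightarrow> nat"
  assumes "bij_betw f E {1..q}"
  shows "(\<Sum>j\<in>E. f j) = q * (q + 1) div 2"
proof -
  have "(\<Sum>j\<in>E. f j) = \<Sum>{1..q}"
    using sum.reindex_bij_betw[OF assms, of id] by simp
  then show ?thesis by (simp add: Sum_Icc_nat)
qed

definition class_map :: "nat \<Rightarrow> nat set set \<Rightarrow> (nat \<Rightarrow> nat set) \<Rightarrow> bool" where
  "class_map n B R \<longleftrightarrow> (\<forall>b\<in>B. \<forall>x\<in>b. R x = b) \<and>
     (\<forall>x<n. (R x \<in> B \<or> R x = {x}) \<and> x \<in> R x \<and> R x \<subseteq> {..<n})"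

lemma class_mapD:
  assumes "class_map n B R" "x < n"
  shows "R x \<in> B \<or> R x = {x}" "x \<in> R x" "R x \<subseteq> {..<n}"
  using assms by (auto simp: class_map_def)

lemma class_map_finite: "class_map n B R \<Longrightarrow> x < n \<Longrightarrow> finite (R x)"
  by (meson class_mapD(3) finite_lessThan rev_finite_subset)

lemma class_map_eq:
  assumes R: "class_map n B R" and "i < n" "j \<in> R i"
  shows "R j = R i"
proof (cases "R i \<in> B")
  case True
  then show ?thesis using R \<open>j \<in> R i\<close> unfolding class_map_def by blast
next
  case False
  then show ?thesis using class_mapD(1)[OF R \<open>i < n\<close>] \<open>j \<in> R i\<close> by simp
qed

lemma qmap_class_map:
  assumes R: "class_map n B R" and i: "i < n"
  shows "qmap n B i = Min (R i)"
proof -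
  have "{j. j < n \<and> (j = i \<or> (\<exists>b\<in>B. i \<in> b \<and> j \<in> b))} = R i"
    using class_mapD[OF R i] R unfolding class_map_def by blast
  then show ?thesis by (simp add: qmap_def)
qed

lemma qmap_eq_iff_class:
  assumes R: "class_map n B R" and "i < n" "j < n"
  shows "qmap n B i = qmap n B j \<longleftrightarrow> j \<in> R i"
proof
  assume "j \<in> R i"
  then show "qmap n B i = qmap n B j"
    using assms class_map_eq qmap_class_map by metis
next
  assume q: "qmap n B i = qmap n B j"
  have ne: "R i \<noteq> {}" "R j \<noteq> {}" using class_mapD(2)[OF R] assms by blast+
  define m where "m = Min (R i)"
  have "m \<in> R i" using Min_in[OF class_map_finite[OF R \<open>i < n\<close>] ne(1)] by (simp add: m_def)
  moreover have "m \<in> R j"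
    using Min_in[OF class_map_finite[OF R \<open>j < n\<close>] ne(2)] q
    by (simp add: m_def qmap_class_map[OF R] assms)
  ultimately have "R i = R j" using class_map_eq[OF R] assms by metis
  then show "j \<in> R i" using class_mapD(2)[OF R \<open>j < n\<close>] by simp
qed

lemma vsum_qmap_class:
  assumes R: "class_map n B R" and i: "i < n" and E: "E \<subseteq> {..<n}"
    and no_loop: "\<forall>c\<in>R i. cyc_pred n c \<notin> R i"
  shows "vsum n B E f (qmap n B i) = (\<Sum>c\<in>R i. cyc_vsum n E f c)"
proof -
  define X where "X = R i \<union> cyc_pred n ` R i"
  have Ri: "R i \<subseteq> {..<n}" "finite (R i)" using class_mapD(3)[OF R i] class_map_finite[OF R i] .
  have incident: "qmap n B i = qmap n B j \<or> qmap n B i = qmap n B (Suc j mod n) \<longleftrightarrow> j \<in> X"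
    if j: "j < n" for j
    using qmap_eq_iff_class[OF R i j] qmap_eq_iff_class[OF R i, of "Suc j mod n"]
      Suc_mod_mem_iff_cyc_pred_image[OF j Ri(1)] j
    unfolding X_def by simp
  have "{j\<in>E. qmap n B i = end1 n B j \<or> qmap n B i = end2 n B j} = X \<inter> E"
  proof (intro set_eqI)
    fix j show "j \<in> {j\<in>E. qmap n B i = end1 n B j \<or> qmap n B i = end2 n B j} \<longleftrightarrow> j \<in> X \<inter> E"
      using incident[of j] E unfolding end1_def end2_def by auto
  qed
  then have "vsum n B E f (qmap n B i) = (\<Sum>j\<in>X. edge_label E f j)"
    using Ri(2) unfolding vsum_def X_def by (simp add: edge_label_def sum.inter_restrict)
  also have "\<dots> = (\<Sum>c\<in>R i. edge_label E f c) + (\<Sum>c\<in>cyc_pred n ` R i. edge_label E f c)"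
    unfolding X_def using Ri(2) no_loop by (intro sum.union_disjoint) auto
  also have "(\<Sum>c\<in>cyc_pred n ` R i. edge_label E f c) = (\<Sum>c\<in>R i. edge_label E f (cyc_pred n c))"
    using inj_on_subset[OF inj_on_cyc_pred Ri(1)] by (simp add: sum.reindex)
  finally show ?thesis by (simp add: cyc_vsum_def sum.distrib)
qed

lemma sum_over_classes:
  assumes R: "class_map n B R" and A: "A \<subseteq> {..<n}" and closed: "\<forall>c\<in>A. R c \<subseteq> A"
  shows "(\<Sum>c\<in>A. \<Sum>d\<in>R c. h d) = (\<Sum>c\<in>A. card (R c) * h c)"
proof -
  have fin: "finite A" using A finite_subset by blast
  have sym: "d \<in> R c \<longleftrightarrow> c \<in> R d" if "c \<in> A" "d \<in> A" for c d
    using that A class_map_eq[OF R] class_mapD(2)[OF R] by blast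
  have "(\<Sum>c\<in>A. \<Sum>d\<in>R c. h d) = (\<Sum>c\<in>A. \<Sum>d\<in>{d. d \<in> A \<and> d \<in> R c}. h d)"
    using closed by (intro sum.cong refl) auto
  also have "\<dots> = (\<Sum>d\<in>A. \<Sum>c\<in>{c. c \<in> A \<and> d \<in> R c}. h d)"
    by (rule sum.swap_restrict[OF fin fin])
  also have "\<dots> = (\<Sum>d\<in>A. \<Sum>c\<in>R d. h d)"
    using closed sym by (intro sum.cong refl) blast
  finally show ?thesis by simp
qed

section \<open>Quotients by parity-preserving pairings\<close>

definition pair_class :: "nat set \<Rightarrow> (nat \<Rightarrow> nat) \<Rightarrow> nat \<Rightarrow> nat set" where
  "pair_class C0 pt x = (if x \<in> C0 then C0 else {x, pt x})"

(* C0 is the block of v_0; the parity condition on pt keeps every other block free of consecutive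
   cycle vertices, so that G has no loops there. *)
definition parity_pairing :: "nat \<Rightarrow> nat set set \<Rightarrow> nat set \<Rightarrow> (nat \<Rightarrow> nat) \<Rightarrow> bool" where
  "parity_pairing n B C0 pt \<longleftrightarrow>
     (\<forall>b\<in>B. \<forall>x\<in>b. pair_class C0 pt x = b) \<and> {..<n} - C0 \<subseteq> \<Union>B \<and>
     (C0 \<in> B \<or> C0 = {0}) \<and> 0 \<in> C0 \<and> C0 \<subseteq> {..<n} \<and> (\<forall>c\<in>C0. cyc_pred n c \<notin> C0) \<and>
     (\<forall>x<n. x \<notin> C0 \<longrightarrow> pt x \<noteq> x \<and> pt x \<noteq> 0 \<and> pt x < n \<and> (even (pt x) \<longleftrightarrow> even x))"

lemma parity_pairingD:
  assumes "parity_pairing n B C0 pt"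
  shows "\<forall>b\<in>B. \<forall>x\<in>b. pair_class C0 pt x = b" "{..<n} - C0 \<subseteq> \<Union>B" "C0 \<in> B \<or> C0 = {0}"
    "0 \<in> C0" "C0 \<subseteq> {..<n}" "\<forall>c\<in>C0. cyc_pred n c \<notin> C0"
    "\<And>x. x < n \<Longrightarrow> x \<notin> C0 \<Longrightarrow> pt x \<noteq> x \<and> pt x \<noteq> 0 \<and> pt x < n \<and> (even (pt x) \<longleftrightarrow> even x)"
  using assms unfolding parity_pairing_def by blast+

lemma class_map_pair_class:
  assumes P: "parity_pairing n B C0 pt"
  shows "class_map n B (pair_class C0 pt)"
  unfolding class_map_def
proof (intro conjI allI impI)
  show "\<forall>b\<in>B. \<forall>x\<in>b. pair_class C0 pt x = b" using parity_pairingD(1)[OF P] .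
  fix x assume x: "x < n"
  show "pair_class C0 pt x \<in> B \<or> pair_class C0 pt x = {x}"
  proof (cases "x \<in> C0")
    case True
    then show ?thesis using parity_pairingD(3)[OF P] by (auto simp: pair_class_def)
  next
    case False
    then obtain b where "b \<in> B" "x \<in> b" using parity_pairingD(2)[OF P] x by blast
    then show ?thesis using parity_pairingD(1)[OF P] by metis
  qed
  show "x \<in> pair_class C0 pt x" by (simp add: pair_class_def)
  show "pair_class C0 pt x \<subseteq> {..<n}"
    using parity_pairingD(5,7)[OF P] x by (auto simp: pair_class_def)
qed

lemma pair_class_partner:
  assumes P: "parity_pairing n B C0 pt" and x: "x < n" "x \<notin> C0"
  shows "pair_class C0 pt x = {x, pt x}" "card (pair_class C0 pt x) = 2"
    "pair_class C0 pt x \<subseteq> {c. c < n \<and> (even c \<longleftrightarrow> even x)}"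
  using x parity_pairingD(7)[OF P x] by (auto simp: pair_class_def)

lemma pair_class_no_loop:
  assumes P: "parity_pairing n B C0 pt" and x: "x < n"
  shows "\<forall>c\<in>pair_class C0 pt x. cyc_pred n c \<notin> pair_class C0 pt x"
proof (cases "x \<in> C0")
  case True
  then show ?thesis using parity_pairingD(6)[OF P] by (simp add: pair_class_def)
next
  case False
  note partner = parity_pairingD(7)[OF P x False]
  have "cyc_pred n c \<notin> {x, pt x}" if c: "c \<in> {x, pt x}" for c
  proof -
    have "x \<noteq> 0" using False parity_pairingD(4)[OF P] by metis
    then have "c \<noteq> 0" "even c \<longleftrightarrow> even x" using c partner by auto
    then have "even (cyc_pred n c) \<longleftrightarrow> odd x" by (auto simp: cyc_pred_def)
    then show ?thesis using partner by auto
  qed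
  then show ?thesis using False by (simp add: pair_class_def)
qed

lemma vsum_qmap_pair_class:
  assumes P: "parity_pairing n B C0 pt" and "i < n" "E \<subseteq> {..<n}"
  shows "vsum n B E f (qmap n B i) = (\<Sum>c\<in>pair_class C0 pt i. cyc_vsum n E f c)"
  using vsum_qmap_class[OF class_map_pair_class[OF P] assms(2,3) pair_class_no_loop[OF P assms(2)]]
  .

lemma qmap_eq_pair_class:
  assumes P: "parity_pairing n B C0 pt" and "i < n" "j < n" "j \<in> pair_class C0 pt i"
  shows "qmap n B i = qmap n B j"
  using qmap_eq_iff_class[OF class_map_pair_class[OF P] assms(2,3)] assms(4) by blast

lemma sum_vsum_parity_class:
  assumes P: "parity_pairing n B C0 pt" and E: "E \<subseteq> {..<n}"
    and C0: "(\<forall>c\<in>C0. even c \<noteq> even d) \<or> ((\<forall>c\<in>C0. even c \<longleftrightarrow> even d) \<and> card C0 = 2)"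
  defines "A \<equiv> {c. c < n \<and> (even c \<longleftrightarrow> even d)}"
  shows "(\<Sum>c\<in>A. vsum n B E f (qmap n B c)) = 2 * (\<Sum>c\<in>A. cyc_vsum n E f c)"
proof -
  have pairs: "pair_class C0 pt c \<subseteq> A \<and> card (pair_class C0 pt c) = 2" if c: "c \<in> A" for c
  proof (cases "c \<in> C0")
    case True
    then show ?thesis using c C0 parity_pairingD(5)[OF P] by (auto simp: pair_class_def A_def)
  next
    case False
    then show ?thesis using c pair_class_partner[OF P, of c] by (auto simp: A_def)
  qed
  have "(\<Sum>c\<in>A. vsum n B E f (qmap n B c)) = (\<Sum>c\<in>A. \<Sum>d\<in>pair_class C0 pt c. cyc_vsum n E f d)"
    using vsum_qmap_pair_class[OF P _ E] by (intro sum.cong) (auto simp: A_def)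
  also have "\<dots> = (\<Sum>c\<in>A. card (pair_class C0 pt c) * cyc_vsum n E f c)"
    using pairs by (intro sum_over_classes[OF class_map_pair_class[OF P]]) (auto simp: A_def)
  also have "\<dots> = 2 * (\<Sum>c\<in>A. cyc_vsum n E f c)"
    using pairs by (simp add: sum_distrib_left)
  finally show ?thesis .
qed

lemma vsum_qmap_parity_pairing:
  assumes P: "parity_pairing n B C0 pt" and E: "E \<subseteq> {..<n}" and i: "i < n"
    and parity: "\<And>c. 0 < c \<Longrightarrow> c < n \<Longrightarrow> cyc_vsum n E f c = (if even c then Ve else Vo)"
  shows "vsum n B E f (qmap n B i) =
    (if i \<in> C0 then cyc_vsum n E f 0 + (\<Sum>c\<in>C0 - {0}. if even c then Ve else Vo)
     else if even i then 2 * Ve else 2 * Vo)"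
proof (cases "i \<in> C0")
  case True
  have "0 \<in> C0" "finite C0" using parity_pairingD(4,5)[OF P] finite_subset by auto
  then have "(\<Sum>c\<in>C0. cyc_vsum n E f c) = cyc_vsum n E f 0 + (\<Sum>c\<in>C0 - {0}. cyc_vsum n E f c)"
    by (simp add: sum.remove)
  also have "(\<Sum>c\<in>C0 - {0}. cyc_vsum n E f c) = (\<Sum>c\<in>C0 - {0}. if even c then Ve else Vo)"
    using parity parity_pairingD(5)[OF P] by (intro sum.cong) auto
  finally show ?thesis using True vsum_qmap_pair_class[OF P i E] by (simp add: pair_class_def)
next
  case False
  have "i \<noteq> 0" using False parity_pairingD(4)[OF P] by metis
  moreover have "pt i \<noteq> 0" "pt i < n" "even (pt i) \<longleftrightarrow> even i" "pt i \<noteq> i"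
    using parity_pairingD(7)[OF P i False] by auto
  ultimately show ?thesis
    using False vsum_qmap_pair_class[OF P i E] parity[of i] parity[of "pt i"] i
    by (simp add: pair_class_def)
qed

lemma three_valued_labeling:
  assumes P: "parity_pairing n B C0 pt" and E: "E \<subseteq> {..<n}" and f: "bij_betw f E {1..card E}"
    and parity: "\<And>c. 0 < c \<Longrightarrow> c < n \<Longrightarrow> cyc_vsum n E f c = (if even c then Ve else Vo)"
    and sep: "Ve \<noteq> Vo"
      "cyc_vsum n E f 0 + (\<Sum>c\<in>C0 - {0}. if even c then Ve else Vo) \<notin> {2 * Ve, 2 * Vo}"
  shows "local_antimagic n B E f \<and> card (vsum n B E f ` qmap n B ` {0..<n}) \<le> 3"
proof -
  define Z where "Z = cyc_vsum n E f 0 + (\<Sum>c\<in>C0 - {0}. if even c then Ve else Vo)"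
  define S where "S i = vsum n B E f (qmap n B i)" for i
  have S_value: "S i = (if i \<in> C0 then Z else if even i then 2 * Ve else 2 * Vo)"
    if "i < n" for i
    unfolding S_def Z_def by (rule vsum_qmap_parity_pairing[OF P E that parity])
  have C0: "0 \<in> C0" "\<forall>c\<in>C0. cyc_pred n c \<notin> C0" using parity_pairingD(4,6)[OF P] by blast+
  have proper: "S j \<noteq> S (Suc j mod n)" if j: "j \<in> E" for j
  proof (cases "Suc j = n")
    case True
    then have "j \<notin> C0" using C0 by (auto simp: cyc_pred_def)
    then show ?thesis using S_value[of j] S_value[of 0] True C0(1) j E sep(2) by (auto simp: Z_def)
  next
    case False
    moreover have "j < n" using j E by auto
    ultimately have "Suc j < n" by simp
    moreover have "\<not> (j \<in> C0 \<and> Suc j \<in> C0)" using C0(2) by (auto simp: cyc_pred_def)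
    ultimately show ?thesis using S_value[of j] S_value[of "Suc j"] sep by (auto simp: Z_def)
  qed
  have "vsum n B E f ` qmap n B ` {0..<n} \<subseteq> {Z, 2 * Ve, 2 * Vo}"
    using S_value by (auto simp: S_def)
  then have "card (vsum n B E f ` qmap n B ` {0..<n}) \<le> card {Z, 2 * Ve, 2 * Vo}"
    by (intro card_mono) auto
  also have "\<dots> \<le> 3" by (simp add: card_insert_if)
  finally have "card (vsum n B E f ` qmap n B ` {0..<n}) \<le> 3" .
  moreover have "local_antimagic n B E f"
    unfolding local_antimagic_def end1_def end2_def using f proper by (simp add: S_def)
  ultimately show ?thesis by blast
qed

section \<open>The C-labeling and its two variants\<close>

lemma cLabel_inj: "inj_on (cLabel n) {0..<n}"
proof (rule inj_onI)
  fix a b assume a: "a \<in> {0..<n}" and b: "b \<in> {0..<n}" and eq: "cLabel n a = cLabel n b"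
  have mixed: False if h: "even x" "odd y" "x < n" "y < n" "cLabel n x = cLabel n y" for x y
  proof -
    obtain p q where "x = 2 * p" "y = 2 * q + 1" using h(1,2) by (auto elim!: evenE oddE)
    then show False using h by (simp add: cLabel_def)
  qed
  show "a = b"
    using mixed[of a b] mixed[of b a] eq a b
    by (cases "even a"; cases "even b") (auto simp: cLabel_def elim!: evenE oddE)
qed

lemma cLabel_bij: "bij_betw (cLabel n) {0..<n} {1..n}"
proof -
  have "cLabel n ` {0..<n} \<subseteq> {1..n}" by (auto simp: cLabel_def)
  moreover have "card (cLabel n ` {0..<n}) = card {1..n}" by (simp add: card_image cLabel_inj)
  ultimately have "cLabel n ` {0..<n} = {1..n}" by (intro card_subset_eq) auto
  then show ?thesis using cLabel_inj by (simp add: bij_betw_def)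
qed

lemma cLabel_last: "0 < n \<Longrightarrow> cLabel n (n - 1) = n div 2 + 1"
  by (auto simp: cLabel_def elim!: evenE oddE)

lemma cyc_vsum_cLabel:
  assumes "0 < c" "c < n"
  shows "cyc_vsum n {0..<n} (cLabel n) c = (if even c then n + 2 else n + 1)"
  using assms by (auto simp: cyc_vsum_def edge_label_def cyc_pred_def cLabel_def elim!: evenE oddE)

lemma cyc_vsum_cLabel_minus_1:
  assumes "0 < c" "c < n"
  shows "cyc_vsum n ({0..<n} - {0}) (\<lambda>j. cLabel n j - 1) c = (if even c then n else n - 1)"
  using assms by (auto simp: cyc_vsum_def edge_label_def cyc_pred_def cLabel_def elim!: evenE oddE)

lemma cyc_vsum_complement_cLabel:
  assumes "0 < c" "c < n"
  shows "cyc_vsum n ({0..<n} - {1}) (\<lambda>j. n - cLabel n j) c = (if even c then n - 2 else n - 1)"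
  using assms by (auto simp: cyc_vsum_def edge_label_def cyc_pred_def cLabel_def elim!: evenE oddE)

lemma cyc_vsum_labelings_0:
  assumes "3 \<le> n"
  shows "cyc_vsum n {0..<n} (cLabel n) 0 = n div 2 + 2"
    "cyc_vsum n ({0..<n} - {0}) (\<lambda>j. cLabel n j - 1) 0 = n div 2"
    "cyc_vsum n ({0..<n} - {1}) (\<lambda>j. n - cLabel n j) 0 = 2 * n - 2 - n div 2"
  using assms cLabel_last[of n]
  by (auto simp: cyc_vsum_def edge_label_def cyc_pred_def cLabel_def mult_2)

lemma bij_cLabel_minus_1:
  assumes "0 < n"
  shows "bij_betw (\<lambda>j. cLabel n j - 1) ({0..<n} - {0}) {1..card ({0..<n} - {0})}"
proof -
  have "bij_betw (cLabel n) ({0..<n} - {0}) ({1..n} - {1})"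
    by (rule bij_betw_DiffI[OF cLabel_bij]) (use assms in \<open>auto simp: bij_betw_def cLabel_def\<close>)
  moreover have "bij_betw (\<lambda>v. v - 1) ({1..n} - {1}) {1..n - 1}"
    by (rule bij_betw_byWitness[where f' = "\<lambda>v. v + 1"]) auto
  ultimately have "bij_betw ((\<lambda>v. v - 1) \<circ> cLabel n) ({0..<n} - {0}) {1..n - 1}"
    by (rule bij_betw_trans)
  then show ?thesis using assms by (simp add: comp_def)
qed

lemma bij_complement_cLabel:
  assumes "2 \<le> n"
  shows "bij_betw (\<lambda>j. n - cLabel n j) ({0..<n} - {1}) {1..card ({0..<n} - {1})}"
proof -
  have "bij_betw (cLabel n) ({0..<n} - {1}) ({1..n} - {n})"
    by (rule bij_betw_DiffI[OF cLabel_bij]) (use assms in \<open>auto simp: bij_betw_def cLabel_def\<close>)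
  moreover have "bij_betw (\<lambda>v. n - v) ({1..n} - {n}) {1..n - 1}"
    by (rule bij_betw_byWitness[where f' = "\<lambda>v. n - v"]) auto
  ultimately show ?thesis using assms by (simp add: bij_betw_trans[unfolded comp_def])
qed

section \<open>Labelings with only two vertex sums\<close>

lemma local_antimagic_adjacent:
  "local_antimagic n B E f \<Longrightarrow> j \<in> E \<Longrightarrow>
    vsum n B E f (qmap n B j) \<noteq> vsum n B E f (qmap n B (Suc j mod n))"
  unfolding local_antimagic_def end1_def end2_def by blast

lemma two_valued_alternating:
  assumes vals: "\<forall>i<n. S i \<in> {a, b}" and adj: "\<And>j. 2 \<le> j \<Longrightarrow> Suc j < n \<Longrightarrow> S j \<noteq> S (Suc j)"
    and i: "2 \<le> i" "i < n"
  shows "S i = (if even i then S 2 else S 3)"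
  using i
proof (induction i rule: dec_induct)
  case (step m)
  then have "S (Suc m) \<noteq> S m" "S 2 \<noteq> S 3" using adj[of m] adj[of 2] by auto
  moreover have "S m \<in> {a, b}" "S (Suc m) \<in> {a, b}" "S 2 \<in> {a, b}" "S 3 \<in> {a, b}"
    using vals step by auto
  ultimately show ?case using step by auto
qed simp

lemma two_valued_parity_pattern:
  assumes P: "parity_pairing n B C0 pt" and la: "local_antimagic n B E f"
    and E: "{2..<n} \<subseteq> E" and n: "4 \<le> n"
    and vals: "\<forall>i<n. vsum n B E f (qmap n B i) \<in> {a, b}"
  defines "S i \<equiv> vsum n B E f (qmap n B i)"
  shows "\<And>c. 0 < c \<Longrightarrow> c < n \<Longrightarrow> S c = (if even c then S 2 else S 3)"
    and "S 2 \<noteq> S 3" and "S 0 \<noteq> S (n - 1)" and "S 0 \<in> {S 2, S 3}"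
proof -
  have adj: "S j \<noteq> S (Suc j)" if "2 \<le> j" "Suc j < n" for j
  proof -
    have "j \<in> E" using that E by auto
    then show ?thesis using local_antimagic_adjacent[OF la, of j] that by (simp add: S_def)
  qed
  have alt: "S c = (if even c then S 2 else S 3)" if "2 \<le> c" "c < n" for c
    using two_valued_alternating[of n S a b c] vals adj that by (auto simp: S_def)
  show S23: "S 2 \<noteq> S 3" using adj[of 2] n by simp
  have "n - 1 \<in> E" using E n by auto
  then show "S 0 \<noteq> S (n - 1)"
    using local_antimagic_adjacent[OF la, of "n - 1"] n by (simp add: S_def)
  have "S 0 \<in> {a, b}" "S 2 \<in> {a, b}" "S 3 \<in> {a, b}" using vals n by (auto simp: S_def)
  then show "S 0 \<in> {S 2, S 3}" using S23 by auto
  have "1 \<notin> C0" using parity_pairingD(4,6)[OF P] by (force simp: cyc_pred_def)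
  then have p1: "pt 1 \<noteq> 1" "odd (pt 1)" "pt 1 < n" "1 \<in> pair_class C0 pt 1"
      "pt 1 \<in> pair_class C0 pt 1"
    using parity_pairingD(7)[OF P, of 1] n by (auto simp: pair_class_def)
  then have "S 1 = S (pt 1)"
    using qmap_eq_pair_class[OF P, of 1 "pt 1"] n by (simp add: S_def)
  also have "\<dots> = S 3" using alt[of "pt 1"] p1 by (auto elim!: oddE)
  finally have "S 1 = S 3" .
  then show "S c = (if even c then S 2 else S 3)" if "0 < c" "c < n" for c
    using alt[of c] that by (cases "c = 1") auto
qed

lemma no_two_valued_C0_parity:
  assumes P: "parity_pairing n B C0 pt" and la: "local_antimagic n B E f"
    and E: "{2..<n} \<subseteq> E" and n: "4 \<le> n"
    and vals: "\<forall>i<n. vsum n B E f (qmap n B i) \<in> {a, b}"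
    and z: "z \<in> C0" "2 \<le> z" "even z \<longleftrightarrow> even (n - 1)"
  shows False
proof -
  define S where "S i = vsum n B E f (qmap n B i)" for i
  note two_valued = two_valued_parity_pattern[OF P la E n vals, folded S_def]
  have "z < n" using z(1) parity_pairingD(5)[OF P] by auto
  then have "S 0 = S z"
    using qmap_eq_pair_class[OF P, of 0 z] z(1) parity_pairingD(4)[OF P] n
    by (simp add: S_def pair_class_def)
  also have "\<dots> = S (n - 1)"
    using two_valued(1)[of z] two_valued(1)[of "n - 1"] z \<open>z < n\<close> n by simp
  finally show False using two_valued(3) by contradiction
qed

lemma no_two_valued_odd_edge_0:
  assumes P: "parity_pairing n B C0 pt" and la: "local_antimagic n B E f"
    and E: "{2..<n} \<subseteq> E" "0 \<in> E" and n: "4 \<le> n" "odd n"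
    and vals: "\<forall>i<n. vsum n B E f (qmap n B i) \<in> {a, b}"
  shows False
proof -
  define S where "S i = vsum n B E f (qmap n B i)" for i
  note two_valued = two_valued_parity_pattern[OF P la E(1) n(1) vals, folded S_def]
  have "S (n - 1) = S 2" using two_valued(1)[of "n - 1"] n by simp
  then have "S 0 = S 3" using two_valued(3,4) by auto
  moreover have "S 1 = S 3" using two_valued(1)[of 1] n by simp
  moreover have "S 0 \<noteq> S 1" using local_antimagic_adjacent[OF la E(2)] n by (simp add: S_def)
  ultimately show False by simp
qed

(* Every edge joins an even and an odd cycle vertex, so both parity classes carry the whole label
   sum, and each of them consists of n div 2 vertices with the same vertex sum. *)
lemma no_two_valued_even_pair:
  assumes P: "parity_pairing n B C0 pt" and la: "local_antimagic n B E f"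
    and E: "E \<subseteq> {..<n}" "{2..<n} \<subseteq> E" and n: "4 \<le> n" "even n"
    and vals: "\<forall>i<n. vsum n B E f (qmap n B i) \<in> {a, b}"
    and C0: "C0 = {0, z}" "even z" "z \<noteq> 0"
  shows False
proof -
  define S where "S i = vsum n B E f (qmap n B i)" for i
  note two_valued = two_valued_parity_pattern[OF P la E(2) n(1) vals, folded S_def]
  define Ev where "Ev = {c. c < n \<and> even c}"
  define Od where "Od = {c. c < n \<and> odd c}"
  have "z < n" using C0(1) parity_pairingD(5)[OF P] by auto
  have "S 0 = S z"
    using qmap_eq_pair_class[OF P, of 0 z] C0 \<open>z < n\<close> n by (simp add: S_def pair_class_def)
  then have S_parity: "S c = (if even c then S 2 else S 3)" if "c < n" for c
    using two_valued(1) that C0 \<open>z < n\<close> by (cases "c = 0") auto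
  have card: "card Ev = n div 2" "card Od = n div 2"
  proof -
    have "Ev = {..<n} - Od" by (auto simp: Ev_def Od_def)
    moreover have "Od \<subseteq> {..<n}" "finite Od" by (auto simp: Od_def)
    ultimately have "card Ev = n - card Od" by (simp add: card_Diff_subset)
    moreover have "n - n div 2 = n div 2" using n(2) by (auto elim!: evenE)
    ultimately show "card Ev = n div 2" "card Od = n div 2"
      using card_odd_lessThan[of n] by (simp_all add: Od_def)
  qed
  have "card Ev * S 2 = (\<Sum>c\<in>Ev. S c)" using S_parity by (simp add: Ev_def)
  also have "\<dots> = 2 * (\<Sum>c\<in>Ev. cyc_vsum n E f c)"
    unfolding S_def Ev_def using sum_vsum_parity_class[OF P E(1), of 0] C0 by simp
  also have "\<dots> = 2 * (\<Sum>c\<in>Od. cyc_vsum n E f c)"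
    using sum_cyc_vsum_even[OF n(2)] sum_cyc_vsum_odd[of n E f] n(2) by (simp add: Ev_def Od_def)
  also have "\<dots> = (\<Sum>c\<in>Od. S c)"
    unfolding S_def Od_def using sum_vsum_parity_class[OF P E(1), of 1] C0 by simp
  also have "\<dots> = card Od * S 3" using S_parity by (simp add: Od_def)
  finally have "S 2 = S 3 \<or> n div 2 = 0" using card by simp
  then have "S 2 = S 3" using n(1) by auto
  then show False using two_valued(2) by contradiction
qed

(* The odd cycle vertices and v_0 all get the value S 3 = f (n - 1) \<le> n - 1, and double counting
   over the odd vertices gives (n div 2 + 2) * S 3 = n * (n - 1), impossible for n \<ge> 5. *)
lemma no_two_valued_odd_without_edge_0:
  assumes P: "parity_pairing n B {0} pt" and la: "local_antimagic n B ({0..<n} - {0}) f"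
    and n: "4 \<le> n" "odd n"
    and vals: "\<forall>i<n. vsum n B ({0..<n} - {0}) f (qmap n B i) \<in> {a, b}"
  shows False
proof -
  define E where "E = {0..<n} - {0}"
  define S where "S i = vsum n B E f (qmap n B i)" for i
  define Od where "Od = {c. c < n \<and> odd c}"
  have E: "E \<subseteq> {..<n}" "{2..<n} \<subseteq> E" by (auto simp: E_def)
  have "card E = n - 1" using n by (simp add: E_def)
  then have bij: "bij_betw f E {1..n - 1}" using la by (simp add: local_antimagic_def E_def)
  note two_valued =
    two_valued_parity_pattern[OF P la[folded E_def] E(2) n(1) vals[folded E_def], folded S_def]
  have "S (n - 1) = S 2" using two_valued(1)[of "n - 1"] n by simp
  then have S0: "S 0 = S 3" using two_valued(3,4) by auto
  have "S 0 = f (n - 1)"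
    using vsum_qmap_pair_class[OF P _ E(1), of 0 f] n
    by (simp add: S_def pair_class_def cyc_vsum_def edge_label_def cyc_pred_def E_def)
  moreover have "n - 1 \<in> E" using n by (simp add: E_def)
  then have "f (n - 1) \<le> n - 1" using bij_betwE[OF bij] by auto
  ultimately have bound: "S 3 \<le> n - 1" using S0 by simp
  obtain m where m: "n = 2 * m + 1" using n(2) by (auto elim!: oddE)
  have "(\<Sum>j<n. edge_label E f j) = (\<Sum>j<n - 1. edge_label E f j) + S 3"
    using S0 \<open>S 0 = f (n - 1)\<close> n by (cases n) (auto simp: edge_label_def E_def)
  moreover have "(\<Sum>j<n. edge_label E f j) = m * (2 * m + 1)"
    using sum_edge_label[OF E(1)] sum_bij_betw_atLeastAtMost[OF bij] m by simp
  moreover have "m * S 3 = 2 * (\<Sum>j<n - 1. edge_label E f j)"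
  proof -
    have "(\<Sum>c\<in>Od. S c) = (\<Sum>c\<in>Od. S 3)"
      using two_valued(1) by (intro sum.cong refl) (auto simp: Od_def odd_pos)
    then have "m * S 3 = (\<Sum>c\<in>Od. S c)"
      using card_odd_lessThan[of n] m by (simp add: Od_def)
    also have "\<dots> = 2 * (\<Sum>c\<in>Od. cyc_vsum n E f c)"
      unfolding S_def Od_def using sum_vsum_parity_class[OF P E(1), of 1] by simp
    also have "\<dots> = 2 * (\<Sum>j<n - 1. edge_label E f j)"
      using sum_cyc_vsum_odd[of n E f] m by (simp add: Od_def)
    finally show ?thesis .
  qed
  ultimately have "2 * m * (2 * m + 1) = (m + 2) * S 3" by (simp add: algebra_simps)
  also have "\<dots> \<le> (m + 2) * (2 * m)" using bound m by (intro mult_le_mono2) simp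
  finally have "2 * m + 1 \<le> m + 2" using n m by (simp add: mult.commute)
  then show False using n m by simp
qed

lemma card_le_2_subset_pair:
  assumes "finite A" "card A \<le> 2"
  shows "\<exists>a b. A \<subseteq> {a, b}"
proof -
  consider "card A = 0" | "card A = 1" | "card A = 2" using assms(2) by linarith
  then show ?thesis
  proof cases
    case 1
    then show ?thesis using assms(1) by simp
  next
    case 2
    then obtain a where "A = {a}" by (auto simp: card_1_singleton_iff)
    then show ?thesis by blast
  next
    case 3
    then obtain a b where "A = {a, b}" by (auto simp: card_2_iff)
    then show ?thesis by blast
  qed
qed

lemma chi_la_eq_3I:
  assumes f0: "local_antimagic n B E f0" "card (vsum n B E f0 ` qmap n B ` {0..<n}) \<le> 3"
    and no_two_valued:
      "\<And>f a b. local_antimagic n B E f \<Longrightarrow> \<forall>i<n. vsum n B E f (qmap n B i) \<in> {a, b} \<Longrightarrow> False"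
  shows "chi_la n B E = 3"
proof -
  have at_least_3: "3 \<le> card (vsum n B E f ` qmap n B ` {0..<n})"
    if la: "local_antimagic n B E f" for f
  proof (rule ccontr)
    let ?V = "vsum n B E f ` qmap n B ` {0..<n}"
    assume "\<not> 3 \<le> card ?V"
    then obtain a b where "?V \<subseteq> {a, b}" using card_le_2_subset_pair[of ?V] by auto
    then have "\<forall>i<n. vsum n B E f (qmap n B i) \<in> {a, b}" by (auto simp: image_subset_iff)
    then show False using no_two_valued[OF la] by blast
  qed
  have "card (vsum n B E f0 ` qmap n B ` {0..<n}) = 3" using f0 at_least_3 le_antisym by blast
  then have "3 \<in> {card (vsum n B E f ` qmap n B ` {0..<n}) |f. local_antimagic n B E f}"
    using f0(1) by force
  then show ?thesis
    unfolding chi_la_def using at_least_3 by (intro cInf_eq_minimum) auto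
qed

lemma edge_set_bounds:
  fixes n :: nat
  assumes "E \<in> {{0..<n}, {0..<n} - {0}, {0..<n} - {1}}"
  shows "E \<subseteq> {..<n}" "{2..<n} \<subseteq> E"
  using assms by auto

(* h stands for n div 2; passing it explicitly makes the side conditions linear for the concrete
   graphs. *)
lemma chi_la_pairing_eq_3:
  assumes P: "parity_pairing n B C0 pt" and n: "4 \<le> n" and h: "n div 2 = h"
    and sep: "h + 2 + (\<Sum>c\<in>C0 - {0}. if even c then n + 2 else n + 1) \<notin> {2 * (n + 2), 2 * (n + 1)}"
      "h + (\<Sum>c\<in>C0 - {0}. if even c then n else n - 1) \<notin> {2 * n, 2 * (n - 1)}"
      "2 * n - 2 - h + (\<Sum>c\<in>C0 - {0}. if even c then n - 2 else n - 1) \<notin> {2 * (n - 2), 2 * (n - 1)}"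
    and E: "E \<in> {{0..<n}, {0..<n} - {0}, {0..<n} - {1}}"
    and no_two_valued:
      "\<And>f a b. local_antimagic n B E f \<Longrightarrow> \<forall>i<n. vsum n B E f (qmap n B i) \<in> {a, b} \<Longrightarrow> False"
  shows "chi_la n B E = 3"
proof -
  have "\<exists>f. local_antimagic n B E f \<and> card (vsum n B E f ` qmap n B ` {0..<n}) \<le> 3"
    using E
  proof (elim insertE emptyE)
    assume E0: "E = {0..<n}"
    have "bij_betw (cLabel n) E {1..card E}" using cLabel_bij[of n] by (simp add: E0)
    from three_valued_labeling[OF P _ this, of "n + 2" "n + 1"]
    show ?thesis
      using cyc_vsum_cLabel cyc_vsum_labelings_0(1) sep(1) n h unfolding E0 by fastforce
  next
    assume E1: "E = {0..<n} - {0}"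
    have "bij_betw (\<lambda>j. cLabel n j - 1) E {1..card E}" using bij_cLabel_minus_1 n by (simp add: E1)
    from three_valued_labeling[OF P _ this, of n "n - 1"]
    show ?thesis
      using cyc_vsum_cLabel_minus_1 cyc_vsum_labelings_0(2) sep(2) n h unfolding E1 by fastforce
  next
    assume E2: "E = {0..<n} - {1}"
    have "bij_betw (\<lambda>j. n - cLabel n j) E {1..card E}"
      using bij_complement_cLabel n by (simp add: E2)
    from three_valued_labeling[OF P _ this, of "n - 2" "n - 1"]
    show ?thesis
      using cyc_vsum_complement_cLabel cyc_vsum_labelings_0(3) sep(3) n h unfolding E2 by fastforce
  qed
  then show ?thesis using chi_la_eq_3I no_two_valued by blast
qed

section \<open>The seven graphs\<close>

(* partner1, ..., partner7 map a cycle vertex v_x outside the block of v_0 to the vertex it is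
   identified with. *)
definition partner1 :: "nat \<Rightarrow> nat \<Rightarrow> nat" where
  "partner1 k x = (if even x then (if x \<le> 4*k then x + (4*k+2) else x - (4*k+2))
     else if x \<le> 2*k+1 then x + (2*k+2) else if x \<le> 4*k+3 then x - (2*k+2)
     else if x \<le> 6*k+3 then x + 2*k else x - 2*k)"

lemma parity_pairing_blocks1:
  assumes k: "1 \<le> k"
  shows "parity_pairing (8*k+4) (blocks k 1) {0, 4*k+2} (partner1 k)"
  unfolding parity_pairing_def
proof (intro conjI)
  show "\<forall>b\<in>blocks k 1. \<forall>x\<in>b. pair_class {0, 4*k+2} (partner1 k) x = b"
    unfolding blocks_def
    by (simp add: ball_Un) (intro conjI ballI; auto simp: pair_class_def partner1_def; presburger)
  show "{..<8*k+4} - {0, 4*k+2} \<subseteq> \<Union>(blocks k 1)"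
  proof
    fix x assume x: "x \<in> {..<8*k+4} - {0, 4*k+2}"
    consider "even x" "x \<le> 4*k" | "even x" "4*k < x" | "odd x" "x \<le> 2*k+1"
      | "odd x" "2*k+1 < x" "x \<le> 4*k+3" | "odd x" "4*k+3 < x" "x \<le> 6*k+3"
      | "odd x" "6*k+3 < x"
      using x by atomize_elim (simp; presburger)
    then show "x \<in> \<Union>(blocks k 1)"
    proof cases
      case 2
      with x show ?thesis
        by (auto simp: blocks_def elim!: evenE intro!: bexI[of _ "x div 2 - (2*k+1)"])
    next
      case 4
      with x show ?thesis
        by (auto simp: blocks_def elim!: oddE intro!: bexI[of _ "x div 2 - (k+1)"])
    next
      case 5
      with x show ?thesis
        by (auto simp: blocks_def elim!: oddE intro!: bexI[of _ "x div 2 - (2*k+2)"])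
    next
      case 6
      with x show ?thesis
        by (auto simp: blocks_def elim!: oddE intro!: bexI[of _ "x div 2 - (3*k+2)"])
    qed (use x in \<open>auto simp: blocks_def elim!: evenE oddE\<close>)
  qed
  show "{0, 4*k+2} \<in> blocks k 1 \<or> {0, 4*k+2} = {0}" by (force simp: blocks_def)
  show "\<forall>x<8*k+4. x \<notin> {0, 4*k+2} \<longrightarrow> partner1 k x \<noteq> x \<and> partner1 k x \<noteq> 0 \<and>
      partner1 k x < 8*k+4 \<and> (even (partner1 k x) \<longleftrightarrow> even x)"
    unfolding partner1_def by auto presburger+
qed (use k in \<open>auto simp: cyc_pred_def\<close>)

lemma chi_la_blocks1:
  assumes k: "1 \<le> k" and E: "E \<in> {{0..<8*k+4}, {0..<8*k+4} - {0}, {0..<8*k+4} - {1}}"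
  shows "chi_la (8*k+4) (blocks k 1) E = 3"
proof (rule chi_la_pairing_eq_3[OF parity_pairing_blocks1[OF k] _ _ _ _ _ E, where h = "4*k+2"])
  fix f a b
  assume la: "local_antimagic (8*k+4) (blocks k 1) E f"
    and vals: "\<forall>i<8*k+4. vsum (8*k+4) (blocks k 1) E f (qmap (8*k+4) (blocks k 1) i) \<in> {a, b}"
  show False
    by (rule no_two_valued_even_pair[OF parity_pairing_blocks1[OF k] la
          edge_set_bounds[OF E] _ _ vals])
      (use k in auto)
qed (use k in simp_all)

definition partner2 :: "nat \<Rightarrow> nat \<Rightarrow> nat" where
  "partner2 k x = (if even x then (if x \<le> 4*k then x + 4*k else x - 4*k)
     else if x < 4*k then x + (4*k+2) else x - (4*k+2))"

lemma parity_pairing_blocks2: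
  assumes k: "1 \<le> k"
  shows "parity_pairing (8*k+2) (blocks k 2) {0, 4*k+1} (partner2 k)"
  unfolding parity_pairing_def
proof (intro conjI)
  show "\<forall>b\<in>blocks k 2. \<forall>x\<in>b. pair_class {0, 4*k+1} (partner2 k) x = b"
    unfolding blocks_def
    by (simp add: ball_Un) (intro conjI ballI; auto simp: pair_class_def partner2_def; presburger)
  show "{..<8*k+2} - {0, 4*k+1} \<subseteq> \<Union>(blocks k 2)"
  proof
    fix x assume x: "x \<in> {..<8*k+2} - {0, 4*k+1}"
    consider "even x" "x \<le> 4*k" | "even x" "4*k < x" | "odd x" "x < 4*k" | "odd x" "4*k+1 < x"
      using x by atomize_elim (simp; presburger)
    then show "x \<in> \<Union>(blocks k 2)"
    proof cases
      case 2
      with x show ?thesis by (auto simp: blocks_def elim!: evenE intro!: bexI[of _ "x div 2 - 2*k"])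
    next
      case 4
      with x show ?thesis
        by (auto simp: blocks_def elim!: oddE intro!: bexI[of _ "x div 2 - (2*k+1)"])
    qed (use x in \<open>auto simp: blocks_def elim!: evenE oddE\<close>)
  qed
  show "{0, 4*k+1} \<in> blocks k 2 \<or> {0, 4*k+1} = {0}" by (force simp: blocks_def)
  show "\<forall>x<8*k+2. x \<notin> {0, 4*k+1} \<longrightarrow> partner2 k x \<noteq> x \<and> partner2 k x \<noteq> 0 \<and>
      partner2 k x < 8*k+2 \<and> (even (partner2 k x) \<longleftrightarrow> even x)"
    unfolding partner2_def by auto presburger+
qed (use k in \<open>auto simp: cyc_pred_def\<close>)

lemma chi_la_blocks2:
  assumes k: "1 \<le> k" and E: "E \<in> {{0..<8*k+2}, {0..<8*k+2} - {0}, {0..<8*k+2} - {1}}"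
  shows "chi_la (8*k+2) (blocks k 2) E = 3"
proof (rule chi_la_pairing_eq_3[OF parity_pairing_blocks2[OF k] _ _ _ _ _ E, where h = "4*k+1"])
  fix f a b
  assume la: "local_antimagic (8*k+2) (blocks k 2) E f"
    and vals: "\<forall>i<8*k+2. vsum (8*k+2) (blocks k 2) E f (qmap (8*k+2) (blocks k 2) i) \<in> {a, b}"
  show False
    by (rule no_two_valued_C0_parity[OF parity_pairing_blocks2[OF k] la
          edge_set_bounds(2)[OF E] _ vals, of "4*k+1"])
      (use k in auto)
qed (use k in simp_all)

definition partner3 :: "nat \<Rightarrow> nat \<Rightarrow> nat" where
  "partner3 k x = (if even x then (if x \<le> 4*k+2 then x + (4*k+2) else x - (4*k+2))
     else if x \<le> 2*k+1 then x + (6*k+4) else if x \<le> 4*k+1 then x + (2*k+2)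
     else if x \<le> 6*k+3 then x - (2*k+2) else x - (6*k+4))"

lemma parity_pairing_blocks3:
  assumes k: "1 \<le> k"
  shows "parity_pairing (8*k+6) (blocks k 3) {0, 4*k+3} (partner3 k)"
  unfolding parity_pairing_def
proof (intro conjI)
  show "\<forall>b\<in>blocks k 3. \<forall>x\<in>b. pair_class {0, 4*k+3} (partner3 k) x = b"
    unfolding blocks_def
    by (simp add: ball_Un) (intro conjI ballI; auto simp: pair_class_def partner3_def; presburger)
  show "{..<8*k+6} - {0, 4*k+3} \<subseteq> \<Union>(blocks k 3)"
  proof
    fix x assume x: "x \<in> {..<8*k+6} - {0, 4*k+3}"
    consider "even x" "x \<le> 4*k+2" | "even x" "4*k+2 < x" | "odd x" "x \<le> 2*k+1"
      | "odd x" "2*k+1 < x" "x \<le> 4*k+1" | "odd x" "4*k+3 < x" "x \<le> 6*k+3"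
      | "odd x" "6*k+3 < x"
      using x by atomize_elim (simp; presburger)
    then show "x \<in> \<Union>(blocks k 3)"
    proof cases
      case 2
      with x show ?thesis
        by (auto simp: blocks_def elim!: evenE intro!: bexI[of _ "x div 2 - (2*k+1)"])
    next
      case 4
      with x show ?thesis
        by (auto simp: blocks_def elim!: oddE intro!: bexI[of _ "x div 2 - (k+1)"])
    next
      case 5
      with x show ?thesis
        by (auto simp: blocks_def elim!: oddE intro!: bexI[of _ "x div 2 - (2*k+2)"])
    next
      case 6
      with x show ?thesis
        by (auto simp: blocks_def elim!: oddE intro!: bexI[of _ "x div 2 - (3*k+2)"])
    qed (use x in \<open>auto simp: blocks_def elim!: evenE oddE\<close>)
  qed
  show "{0, 4*k+3} \<in> blocks k 3 \<or> {0, 4*k+3} = {0}" by (force simp: blocks_def)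
  show "\<forall>x<8*k+6. x \<notin> {0, 4*k+3} \<longrightarrow> partner3 k x \<noteq> x \<and> partner3 k x \<noteq> 0 \<and>
      partner3 k x < 8*k+6 \<and> (even (partner3 k x) \<longleftrightarrow> even x)"
    unfolding partner3_def by auto presburger+
qed (use k in \<open>auto simp: cyc_pred_def\<close>)

lemma chi_la_blocks3:
  assumes k: "1 \<le> k" and E: "E \<in> {{0..<8*k+6}, {0..<8*k+6} - {0}, {0..<8*k+6} - {1}}"
  shows "chi_la (8*k+6) (blocks k 3) E = 3"
proof (rule chi_la_pairing_eq_3[OF parity_pairing_blocks3[OF k] _ _ _ _ _ E, where h = "4*k+3"])
  fix f a b
  assume la: "local_antimagic (8*k+6) (blocks k 3) E f"
    and vals: "\<forall>i<8*k+6. vsum (8*k+6) (blocks k 3) E f (qmap (8*k+6) (blocks k 3) i) \<in> {a, b}"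
  show False
    by (rule no_two_valued_C0_parity[OF parity_pairing_blocks3[OF k] la
          edge_set_bounds(2)[OF E] _ vals, of "4*k+3"])
      (use k in auto)
qed (use k in simp_all)

definition partner4 :: "nat \<Rightarrow> nat \<Rightarrow> nat" where
  "partner4 k x = (if even x then (if x \<le> 4*k then x + 4*k else x - 4*k)
     else if x < 2*k then x + 2*k else if x < 4*k then x - 2*k
     else if x < 6*k then x + 2*k else x - 2*k)"

lemma parity_pairing_blocks4:
  assumes k: "1 \<le> k"
  shows "parity_pairing (8*k+1) (blocks k 4) {0} (partner4 k)"
  unfolding parity_pairing_def
proof (intro conjI)
  show "\<forall>b\<in>blocks k 4. \<forall>x\<in>b. pair_class {0} (partner4 k) x = b"
    unfolding blocks_def
    by (simp add: ball_Un) (intro conjI ballI; auto simp: pair_class_def partner4_def; presburger)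
  show "{..<8*k+1} - {0} \<subseteq> \<Union>(blocks k 4)"
  proof
    fix x assume x: "x \<in> {..<8*k+1} - {0}"
    consider "even x" "x \<le> 4*k" | "even x" "4*k < x" | "odd x" "x < 2*k"
      | "odd x" "2*k < x" "x < 4*k" | "odd x" "4*k < x" "x < 6*k" | "odd x" "6*k < x"
      using x by atomize_elim (simp; presburger)
    then show "x \<in> \<Union>(blocks k 4)"
    proof cases
      case 2
      with x show ?thesis by (auto simp: blocks_def elim!: evenE intro!: bexI[of _ "x div 2 - 2*k"])
    next
      case 4
      with x show ?thesis by (auto simp: blocks_def elim!: oddE intro!: bexI[of _ "x div 2 - k"])
    next
      case 5
      with x show ?thesis by (auto simp: blocks_def elim!: oddE intro!: bexI[of _ "x div 2 - 2*k"])
    next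
      case 6
      with x show ?thesis by (auto simp: blocks_def elim!: oddE intro!: bexI[of _ "x div 2 - 3*k"])
    qed (use x in \<open>auto simp: blocks_def elim!: evenE oddE\<close>)
  qed
  show "{0} \<in> blocks k 4 \<or> {0} = {0}" by (force simp: blocks_def)
  show "\<forall>x<8*k+1. x \<notin> {0} \<longrightarrow> partner4 k x \<noteq> x \<and> partner4 k x \<noteq> 0 \<and>
      partner4 k x < 8*k+1 \<and> (even (partner4 k x) \<longleftrightarrow> even x)"
    unfolding partner4_def by auto presburger+
qed (use k in \<open>auto simp: cyc_pred_def\<close>)

lemma chi_la_blocks4:
  assumes k: "1 \<le> k" and E: "E \<in> {{0..<8*k+1}, {0..<8*k+1} - {0}, {0..<8*k+1} - {1}}"
  shows "chi_la (8*k+1) (blocks k 4) E = 3"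
proof (rule chi_la_pairing_eq_3[OF parity_pairing_blocks4[OF k] _ _ _ _ _ E, where h = "4*k"])
  fix f a b
  assume la: "local_antimagic (8*k+1) (blocks k 4) E f"
    and vals: "\<forall>i<8*k+1. vsum (8*k+1) (blocks k 4) E f (qmap (8*k+1) (blocks k 4) i) \<in> {a, b}"
  show False
  proof (cases "E = {0..<8*k+1} - {0}")
    case True
    then show False
      using no_two_valued_odd_without_edge_0[OF parity_pairing_blocks4[OF k]] la vals k by auto
  next
    case False
    then have "0 \<in> E" using E by auto
    then show False
      by (rule no_two_valued_odd_edge_0[OF parity_pairing_blocks4[OF k] la
          edge_set_bounds(2)[OF E] _ _ _ vals])
        (use k in auto)
  qed
qed (use k in simp_all)

definition partner5 :: "nat \<Rightarrow> nat \<Rightarrow> nat" where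
  "partner5 k x = (if even x then (if x \<le> 4*k+2 then x + (4*k+2) else x - (4*k+2))
     else if x \<le> 2*k+1 then x + (6*k+2) else if x \<le> 4*k+1 then x + 2*k
     else if x \<le> 6*k+1 then x - 2*k else x - (6*k+2))"

lemma parity_pairing_blocks5:
  assumes k: "1 \<le> k"
  shows "parity_pairing (8*k+5) (blocks k 5) {0} (partner5 k)"
  unfolding parity_pairing_def
proof (intro conjI)
  show "\<forall>b\<in>blocks k 5. \<forall>x\<in>b. pair_class {0} (partner5 k) x = b"
    unfolding blocks_def
    by (simp add: ball_Un) (intro conjI ballI; auto simp: pair_class_def partner5_def; presburger)
  show "{..<8*k+5} - {0} \<subseteq> \<Union>(blocks k 5)"
  proof
    fix x assume x: "x \<in> {..<8*k+5} - {0}"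
    consider "even x" "x \<le> 4*k+2" | "even x" "4*k+2 < x" | "odd x" "x \<le> 2*k+1"
      | "odd x" "2*k+1 < x" "x \<le> 4*k+1" | "odd x" "4*k+1 < x" "x \<le> 6*k+1"
      | "odd x" "6*k+1 < x"
      using x by atomize_elim (simp; presburger)
    then show "x \<in> \<Union>(blocks k 5)"
    proof cases
      case 2
      with x show ?thesis
        by (auto simp: blocks_def elim!: evenE intro!: bexI[of _ "x div 2 - (2*k+1)"])
    next
      case 4
      with x show ?thesis
        by (auto simp: blocks_def elim!: oddE intro!: bexI[of _ "x div 2 - (k+1)"])
    next
      case 5
      with x show ?thesis
        by (auto simp: blocks_def elim!: oddE intro!: bexI[of _ "x div 2 - (2*k+1)"])
    next
      case 6
      with x show ?thesis
        by (auto simp: blocks_def elim!: oddE intro!: bexI[of _ "x div 2 - (3*k+1)"])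
    qed (use x in \<open>auto simp: blocks_def elim!: evenE oddE\<close>)
  qed
  show "{0} \<in> blocks k 5 \<or> {0} = {0}" by (force simp: blocks_def)
  show "\<forall>x<8*k+5. x \<notin> {0} \<longrightarrow> partner5 k x \<noteq> x \<and> partner5 k x \<noteq> 0 \<and>
      partner5 k x < 8*k+5 \<and> (even (partner5 k x) \<longleftrightarrow> even x)"
    unfolding partner5_def by auto presburger+
qed (use k in \<open>auto simp: cyc_pred_def\<close>)

lemma chi_la_blocks5:
  assumes k: "1 \<le> k" and E: "E \<in> {{0..<8*k+5}, {0..<8*k+5} - {0}, {0..<8*k+5} - {1}}"
  shows "chi_la (8*k+5) (blocks k 5) E = 3"
proof (rule chi_la_pairing_eq_3[OF parity_pairing_blocks5[OF k] _ _ _ _ _ E, where h = "4*k+2"])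
  fix f a b
  assume la: "local_antimagic (8*k+5) (blocks k 5) E f"
    and vals: "\<forall>i<8*k+5. vsum (8*k+5) (blocks k 5) E f (qmap (8*k+5) (blocks k 5) i) \<in> {a, b}"
  show False
  proof (cases "E = {0..<8*k+5} - {0}")
    case True
    then show False
      using no_two_valued_odd_without_edge_0[OF parity_pairing_blocks5[OF k]] la vals k by auto
  next
    case False
    then have "0 \<in> E" using E by auto
    then show False
      by (rule no_two_valued_odd_edge_0[OF parity_pairing_blocks5[OF k] la
          edge_set_bounds(2)[OF E] _ _ _ vals])
        (use k in auto)
  qed
qed (use k in simp_all)

definition partner6 :: "nat \<Rightarrow> nat \<Rightarrow> nat" where
  "partner6 k x = (if even x then (if x \<le> 2*k then x + 4*k else if x \<le> 4*k then x + (4*k+2)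
       else if x \<le> 6*k then x - 4*k else x - (4*k+2))
     else if x < 2*k then 8*k+2 - x else if x \<le> 4*k+1 then x + 2*k
     else if x \<le> 6*k+1 then x - 2*k else 8*k+2 - x)"

lemma parity_pairing_blocks6:
  assumes k: "1 \<le> k"
  shows "parity_pairing (8*k+3) (blocks k 6) {0, 2*k+1, 6*k+2} (partner6 k)"
  unfolding parity_pairing_def
proof (intro conjI)
  show "\<forall>b\<in>blocks k 6. \<forall>x\<in>b. pair_class {0, 2*k+1, 6*k+2} (partner6 k) x = b"
    unfolding blocks_def
    by (simp add: ball_Un) (intro conjI ballI; auto simp: pair_class_def partner6_def; presburger)
  show "{..<8*k+3} - {0, 2*k+1, 6*k+2} \<subseteq> \<Union>(blocks k 6)"
  proof
    fix x assume x: "x \<in> {..<8*k+3} - {0, 2*k+1, 6*k+2}"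
    consider "even x" "x \<le> 2*k" | "even x" "2*k < x" "x \<le> 4*k"
      | "even x" "4*k < x" "x \<le> 6*k" | "even x" "6*k+2 < x" | "odd x" "x < 2*k"
      | "odd x" "2*k+1 < x" "x \<le> 4*k+1" | "odd x" "4*k+1 < x" "x \<le> 6*k+1"
      | "odd x" "6*k+1 < x"
      using x by atomize_elim (simp; presburger)
    then show "x \<in> \<Union>(blocks k 6)"
    proof cases
      case 2
      with x show ?thesis by (auto simp: blocks_def elim!: evenE intro!: bexI[of _ "x div 2 - k"])
    next
      case 3
      with x show ?thesis by (auto simp: blocks_def elim!: evenE intro!: bexI[of _ "x div 2 - 2*k"])
    next
      case 4
      with x show ?thesis
        by (auto simp: blocks_def elim!: evenE intro!: bexI[of _ "x div 2 - (3*k+1)"])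
    next
      case 6
      with x show ?thesis
        by (auto simp: blocks_def elim!: oddE intro!: bexI[of _ "x div 2 - (k+1)"])
    next
      case 7
      with x show ?thesis
        by (auto simp: blocks_def elim!: oddE intro!: bexI[of _ "x div 2 - (2*k+1)"])
    next
      case 8
      with x show ?thesis by (auto simp: blocks_def elim!: oddE intro!: bexI[of _ "4*k - x div 2"])
    qed (use x in \<open>auto simp: blocks_def elim!: evenE oddE\<close>)
  qed
  show "{0, 2*k+1, 6*k+2} \<in> blocks k 6 \<or> {0, 2*k+1, 6*k+2} = {0}" by (force simp: blocks_def)
  show "\<forall>x<8*k+3. x \<notin> {0, 2*k+1, 6*k+2} \<longrightarrow> partner6 k x \<noteq> x \<and> partner6 k x \<noteq> 0 \<and>
      partner6 k x < 8*k+3 \<and> (even (partner6 k x) \<longleftrightarrow> even x)"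
    unfolding partner6_def by auto presburger+
qed (use k in \<open>auto simp: cyc_pred_def\<close>)

lemma chi_la_blocks6:
  assumes k: "1 \<le> k" and E: "E \<in> {{0..<8*k+3}, {0..<8*k+3} - {0}, {0..<8*k+3} - {1}}"
  shows "chi_la (8*k+3) (blocks k 6) E = 3"
proof (rule chi_la_pairing_eq_3[OF parity_pairing_blocks6[OF k] _ _ _ _ _ E, where h = "4*k+1"])
  fix f a b
  assume la: "local_antimagic (8*k+3) (blocks k 6) E f"
    and vals: "\<forall>i<8*k+3. vsum (8*k+3) (blocks k 6) E f (qmap (8*k+3) (blocks k 6) i) \<in> {a, b}"
  show False
    by (rule no_two_valued_C0_parity[OF parity_pairing_blocks6[OF k] la
          edge_set_bounds(2)[OF E] _ vals, of "6*k+2"])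
      (use k in auto)
qed (use k in simp_all)

definition partner7 :: "nat \<Rightarrow> nat \<Rightarrow> nat" where
  "partner7 k x = (if even x then (if x \<le> 2*k then x + (4*k+4) else if x \<le> 4*k+4 then x + (4*k+2)
       else if x \<le> 6*k+4 then x - (4*k+4) else x - (4*k+2))
     else if x \<le> 4*k+1 then (if even (x div 2) then x div 2 + (4*k+3) else x div 2 + (6*k+6))
     else if x \<le> 6*k+3 then 2*x - (8*k+5) else 2*x - (12*k+11))"

lemma partner7_parity:
  assumes x: "x < 8*k+7" "x \<notin> {0, 2*k+2, 6*k+5}"
  shows "partner7 k x \<noteq> x \<and> partner7 k x \<noteq> 0 \<and> partner7 k x < 8*k+7 \<and>
    (even (partner7 k x) \<longleftrightarrow> even x)"
proof (cases "even x")
  case True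
  then show ?thesis using x unfolding partner7_def by auto
next
  case False
  then obtain m where m: "x = 2*m+1" by (auto elim!: oddE)
  have "m \<noteq> 3*k+2" using x m by auto
  then consider "m \<le> 2*k" | "2*k < m" "m \<le> 3*k+1" | "3*k+2 < m" by linarith
  then show ?thesis
  proof cases
    case 1
    then show ?thesis using m unfolding partner7_def by (cases "even m") (auto elim!: evenE oddE)
  next
    case 2
    then show ?thesis using m unfolding partner7_def by auto
  next
    case 3
    then show ?thesis using m x unfolding partner7_def by auto
  qed
qed

lemma parity_pairing_blocks7:
  assumes k: "1 \<le> k"
  shows "parity_pairing (8*k+7) (blocks k 7) {0, 2*k+2, 6*k+5} (partner7 k)"
  unfolding parity_pairing_def
proof (intro conjI)
  show "\<forall>b\<in>blocks k 7. \<forall>x\<in>b. pair_class {0, 2*k+2, 6*k+5} (partner7 k) x = b"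
    unfolding blocks_def
    by (simp add: ball_Un) (intro conjI ballI; auto simp: pair_class_def partner7_def; presburger)
  show "{..<8*k+7} - {0, 2*k+2, 6*k+5} \<subseteq> \<Union>(blocks k 7)"
  proof
    fix x assume x: "x \<in> {..<8*k+7} - {0, 2*k+2, 6*k+5}"
    consider "even x" "x \<le> 2*k" | "even x" "2*k+2 < x" "x \<le> 4*k+4"
      | "even x" "4*k+4 < x" "x \<le> 6*k+4" | "even x" "6*k+4 < x" | "odd x" "x \<le> 4*k+1"
      | "odd x" "4*k+1 < x" "x \<le> 6*k+3" | "odd x" "6*k+5 < x"
      using x by atomize_elim (simp; presburger)
    then show "x \<in> \<Union>(blocks k 7)"
    proof cases
      case 2
      with x show ?thesis
        by (auto simp: blocks_def elim!: evenE intro!: bexI[of _ "x div 2 - (k+1)"])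
    next
      case 3
      with x show ?thesis
        by (auto simp: blocks_def elim!: evenE intro!: bexI[of _ "x div 2 - (2*k+2)"])
    next
      case 4
      with x show ?thesis
        by (auto simp: blocks_def elim!: evenE intro!: bexI[of _ "x div 2 - (3*k+2)"])
    next
      case 5
      then obtain m where "x = 2*m+1" "m \<le> 2*k" by (auto elim!: oddE)
      then show ?thesis by (cases "even m") (auto simp: blocks_def elim!: evenE oddE)
    next
      case 6
      with x show ?thesis
        by (auto simp: blocks_def elim!: oddE intro!: bexI[of _ "x div 2 - (2*k+1)"])
    next
      case 7
      with x show ?thesis
        by (auto simp: blocks_def elim!: oddE intro!: bexI[of _ "x div 2 - (3*k+3)"])
    qed (use x in \<open>auto simp: blocks_def elim!: evenE oddE\<close>)
  qed
  show "{0, 2*k+2, 6*k+5} \<in> blocks k 7 \<or> {0, 2*k+2, 6*k+5} = {0}" by (force simp: blocks_def)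
  show "\<forall>x<8*k+7. x \<notin> {0, 2*k+2, 6*k+5} \<longrightarrow> partner7 k x \<noteq> x \<and> partner7 k x \<noteq> 0 \<and>
      partner7 k x < 8*k+7 \<and> (even (partner7 k x) \<longleftrightarrow> even x)"
    using partner7_parity by blast
qed (use k in \<open>auto simp: cyc_pred_def\<close>)

lemma chi_la_blocks7:
  assumes k: "1 \<le> k" and E: "E \<in> {{0..<8*k+7}, {0..<8*k+7} - {0}, {0..<8*k+7} - {1}}"
  shows "chi_la (8*k+7) (blocks k 7) E = 3"
proof (rule chi_la_pairing_eq_3[OF parity_pairing_blocks7[OF k] _ _ _ _ _ E, where h = "4*k+3"])
  fix f a b
  assume la: "local_antimagic (8*k+7) (blocks k 7) E f"
    and vals: "\<forall>i<8*k+7. vsum (8*k+7) (blocks k 7) E f (qmap (8*k+7) (blocks k 7) i) \<in> {a, b}"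
  show False
    by (rule no_two_valued_C0_parity[OF parity_pairing_blocks7[OF k] la
          edge_set_bounds(2)[OF E] _ vals, of "2*k+2"])
      (use k in auto)
qed (use k in simp_all)

lemma cLabel_eq_1_or_n_imp_le_1:
  assumes "e < n" "cLabel n e \<in> {1, n}"
  shows "e \<le> 1"
  using assms by (auto simp: cLabel_def split: if_splits elim!: evenE oddE)

theorem mainTheorem13:
  fixes k t e :: nat
  assumes "k \<ge> 2" and "t \<in> {1..7}"
    and "e < cyc_n k t" and "cLabel (cyc_n k t) e \<in> {1, cyc_n k t}"
  shows "chi_la (cyc_n k t) (blocks k t) {0..<cyc_n k t} = 3
       \<and> chi_la (cyc_n k t) (blocks k t) ({0..<cyc_n k t} - {e}) = 3"
proof -
  have k: "1 \<le> k" using assms(1) by simp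
  have "t = 1 \<or> t = 2 \<or> t = 3 \<or> t = 4 \<or> t = 5 \<or> t = 6 \<or> t = 7" using assms(2) by auto
  then have "\<forall>E \<in> {{0..<cyc_n k t}, {0..<cyc_n k t} - {0}, {0..<cyc_n k t} - {1}}.
      chi_la (cyc_n k t) (blocks k t) E = 3"
    using chi_la_blocks1[OF k] chi_la_blocks2[OF k] chi_la_blocks3[OF k] chi_la_blocks4[OF k]
      chi_la_blocks5[OF k] chi_la_blocks6[OF k] chi_la_blocks7[OF k]
    by (elim disjE) (simp_all add: cyc_n_def)
  moreover have "e \<le> 1" using cLabel_eq_1_or_n_imp_le_1 assms(3,4) .
  ultimately show ?thesis by (auto simp: le_Suc_eq)
qed

end
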